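(* Let $k_1,k_2$ be positive integers with $k_1<k_2\le2k_1$, and set $\delta=k_2-k_1$. Let $\digamma_{k_1}^{k_2}$ be the $(\delta+1)\times(\delta+1)$ matrix whose $(i,j)$ entry is $\frac{1}{(k_1-i+j)!}$ for $1\le i,j\le\delta+1$. Then $$\det(\digamma_{k_1}^{k_2})=\frac{\delta!\,(\delta-1)!\cdots1!}{k_2!\,(k_2-1)!\cdots k_1!};$$ in particular $\digamma_{k_1}^{k_2}$ is invertible. *)

theory Defs
  imports "Jordan_Normal_Form.Determinant"
begin

(* Jordan_Normal_Form matrices are 0-indexed, so the 0-based entry
   (i,j) is the paper's entry (i+1,j+1), i.e. 1/(k1-(i+1)+(j+1))! = 1/(k1-i+j)!.
   Under k2 <= 2 k1 we have i <= delta <= k1, so the natural subtraction never truncates. *)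
definition digamma_mat :: "nat \<Rightarrow> nat \<Rightarrow> real mat" where
  "digamma_mat k1 k2 = mat (k2 - k1 + 1) (k2 - k1 + 1) (\<lambda>(i, j). 1 / fact (k1 - i + j))"

end

theory Submission
  imports Defs
begin

text \<open>
  Consider more generally the \<open>n \<times> n\<close> matrix \<open>M(c)\<close> with entries \<open>1 / (c i + j)!\<close> for an
  arbitrary sequence \<open>c\<close>, and let \<open>K = c (n - 1)\<close>. Subtracting \<open>(j + 1 + K)\<close> times
  column \<open>j + 1\<close> from column \<open>j\<close> for every \<open>j < n - 1\<close> (a column operation of determinant 1)
  turns entry \<open>(i, j)\<close> into \<open>(c i - K) / (c i + j + 1)!\<close>, which vanishes in the last row.
  Expanding along the last row and pulling the factors \<open>c i - K\<close> out of the rows leaves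
  \<open>M(c + 1)\<close> of size \<open>n - 1\<close>, so by induction \<open>det M(c)\<close> is the Vandermonde-like quotient
  \<open>\<Prod>\<^sub>i\<^sub><\<^sub>i\<^sub>' (c i - c i') / \<Prod>\<^sub>i (c i + n - 1)!\<close>. For \<open>c i = k\<^sub>1 - i\<close> the inner products
  \<open>\<Prod>\<^sub>i\<^sub><\<^sub>i\<^sub>' (i' - i)\<close> are the factorials \<open>i'!\<close>.
\<close>

definition inv_fact_mat :: "(nat \<Rightarrow> nat) \<Rightarrow> nat \<Rightarrow> real mat" where
  "inv_fact_mat c n = mat n n (\<lambda>(i, j). 1 / fact (c i + j))"

definition fact_column_op_mat :: "nat \<Rightarrow> nat \<Rightarrow> real mat" where
  "fact_column_op_mat K n = mat n n (\<lambda>(r, j).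
     (if r = j then 1 else 0) + (if r = Suc j then - real (Suc j + K) else 0))"

lemma inv_fact_mat_carrier [simp]: "inv_fact_mat c n \<in> carrier_mat n n"
  by (simp add: inv_fact_mat_def)

lemma fact_column_op_mat_carrier [simp]: "fact_column_op_mat K n \<in> carrier_mat n n"
  by (simp add: fact_column_op_mat_def)

lemma fact_column_op_mat_dim [simp]:
  "dim_row (fact_column_op_mat K n) = n" "dim_col (fact_column_op_mat K n) = n"
  by (simp_all add: fact_column_op_mat_def)

lemma det_fact_column_op_mat: "det (fact_column_op_mat K n) = 1"
proof -
  have "det (fact_column_op_mat K n) = prod_list (diag_mat (fact_column_op_mat K n))"
    by (rule det_lower_triangular[of n]) (auto simp: fact_column_op_mat_def)
  also have "\<dots> = 1"
    by (simp add: prod_list_diag_prod fact_column_op_mat_def)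
  finally show ?thesis .
qed

lemma inv_fact_over_fact_Suc:
  "1 / fact (a + j) - real (Suc j + K) / fact (a + Suc j) =
     (real a - real K) / (fact (a + Suc j) :: real)"
proof -
  have sub_fraction: "1 / f - b / (d * f) = (d - b) / (d * f)"
    if "d \<noteq> 0" "f \<noteq> 0" for b d f :: real
    using that by (simp add: field_simps)
  have fact_Suc_split: "(fact (a + Suc j) :: real) = (real a + real j + 1) * fact (a + j)"
    by simp
  show ?thesis
    unfolding fact_Suc_split by (subst sub_fraction) auto
qed

lemma inv_fact_mat_mult_column_op_entry:
  assumes "i < n" and "j < n"
  shows "(inv_fact_mat c n * fact_column_op_mat K n) $$ (i, j) =
    (if Suc j < n then (real (c i) - real K) / fact (c i + Suc j) else 1 / fact (c i + j))"
proof -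
  have "(inv_fact_mat c n * fact_column_op_mat K n) $$ (i, j) =
      (\<Sum>r<n. 1 / fact (c i + r) * fact_column_op_mat K n $$ (r, j))"
    using assms by (simp add: inv_fact_mat_def scalar_prod_def lessThan_atLeast0)
  also have "\<dots> = (\<Sum>r<n. (if r = j then 1 / fact (c i + r) else 0) -
      (if r = Suc j then real (Suc j + K) / fact (c i + r) else 0))"
    using assms by (intro sum.cong) (auto simp: fact_column_op_mat_def divide_simps simp del: fact_Suc)
  also have "\<dots> = 1 / fact (c i + j) -
      (if Suc j < n then real (Suc j + K) / fact (c i + Suc j) else 0)"
    using assms by (simp add: sum_subtractf sum.delta)
  finally show ?thesis
    by (cases "Suc j < n") (simp_all only: inv_fact_over_fact_Suc if_True if_False diff_zero)
qed

lemma det_inv_fact_mat_Suc: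
  "det (inv_fact_mat c (Suc m)) =
     (\<Prod>i<m. real (c i) - real (c m)) / fact (c m + m) * det (inv_fact_mat (\<lambda>i. Suc (c i)) m)"
proof -
  define n where "n = Suc m"
  define G where "G = inv_fact_mat c n * fact_column_op_mat (c m) n"
  have G: "G \<in> carrier_mat n n"
    unfolding G_def by (rule mult_carrier_mat[of _ n n]) simp_all
  have m: "m < n"
    unfolding n_def by simp
  have G_entry: "G $$ (i, j) =
      (if Suc j < n then (real (c i) - real (c m)) / fact (c i + Suc j) else 1 / fact (c i + j))"
    if "i < n" "j < n" for i j
    unfolding G_def using that by (rule inv_fact_mat_mult_column_op_entry)
  have "det (inv_fact_mat c n) = det G"
    unfolding G_def by (simp add: det_mult[of _ n] det_fact_column_op_mat)
  also have "\<dots> = (\<Sum>j<n. G $$ (m, j) * cofactor G m j)"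
    by (rule laplace_expansion_row[OF G m])
  also have "\<dots> = G $$ (m, m) * cofactor G m m"
    \<comment> \<open>the last row of \<open>G\<close> is zero except on the diagonal\<close>
    by (subst sum.mono_neutral_right[of "{..<n}" "{m}"]) (use m in \<open>auto simp: G_entry n_def\<close>)
  also have "G $$ (m, m) = 1 / fact (c m + m)"
    using m by (simp add: G_entry n_def)
  also have "cofactor G m m = det (mat_delete G m m)"
    by (simp add: cofactor_def power_add[symmetric] mult_2[symmetric])
  also have "mat_delete G m m =
      mat\<^sub>r m m (\<lambda>i. (real (c i) - real (c m)) \<cdot>\<^sub>v vec m (\<lambda>j. 1 / fact (Suc (c i) + j)))"
    using G by (intro eq_matI) (auto simp: mat_delete_def G_entry n_def)
  also have "det \<dots> = (\<Prod>i<m. real (c i) - real (c m)) *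
      det (mat\<^sub>r m m (\<lambda>i. vec m (\<lambda>j. 1 / fact (Suc (c i) + j))))"
    by (subst det_rows_mul) (auto simp: atLeast0LessThan)
  also have "mat\<^sub>r m m (\<lambda>i. vec m (\<lambda>j. 1 / fact (Suc (c i) + j))) = inv_fact_mat (\<lambda>i. Suc (c i)) m"
    by (rule eq_matI) (auto simp: inv_fact_mat_def)
  finally show ?thesis
    by (simp add: n_def)
qed

lemma det_inv_fact_mat:
  "det (inv_fact_mat c n) =
     (\<Prod>i'<n. \<Prod>i<i'. real (c i) - real (c i')) / (\<Prod>i<n. fact (c i + n - 1))"
proof (induction n arbitrary: c)
  case 0
  then show ?case
    by (simp add: inv_fact_mat_def)
next
  case (Suc m)
  have "det (inv_fact_mat (\<lambda>i. Suc (c i)) m) =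
      (\<Prod>i'<m. \<Prod>i<i'. real (c i) - real (c i')) / (\<Prod>i<m. fact (c i + m))"
    using Suc.IH[of "\<lambda>i. Suc (c i)"] by simp
  then show ?case
    by (simp add: det_inv_fact_mat_Suc field_simps)
qed

lemma prod_descending_diffs_eq_prod_fact:
  assumes "d \<le> a"
  shows "(\<Prod>i'<Suc d. \<Prod>i<i'. real (a - i) - real (a - i')) = (\<Prod>i = 1..d. fact i)"
proof -
  have "(\<Prod>i<i'. real (a - i) - real (a - i')) = fact i'" if "i' \<le> d" for i'
  proof -
    have "(\<Prod>i<i'. real (a - i) - real (a - i')) = (\<Prod>i<i'. real (i' - i))"
      using that assms by (intro prod.cong) (auto simp: of_nat_diff)
    then show ?thesis
      by (simp add: fact_prod_rev[of i'] atLeast0LessThan)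
  qed
  then have "(\<Prod>i'<Suc d. \<Prod>i<i'. real (a - i) - real (a - i')) = (\<Prod>i\<in>{0..d}. fact i)"
    by (auto simp: lessThan_Suc_atMost atMost_atLeast0 intro!: prod.cong)
  also have "\<dots> = (\<Prod>i = 1..d. fact i)"
    by (simp add: prod.atLeast_Suc_atMost)
  finally show ?thesis .
qed

lemma det_inv_fact_mat_descending:
  assumes "d \<le> a"
  shows "det (inv_fact_mat (\<lambda>i. a - i) (Suc d)) = (\<Prod>i = 1..d. fact i) / (\<Prod>i = a..a + d. fact i)"
proof -
  have denominator: "(\<Prod>i<Suc d. fact (a - i + Suc d - 1)) = (\<Prod>i = a..a + d. (fact i :: real))"
    using assms by (intro prod.reindex_bij_witness[of _ "\<lambda>k. a + d - k" "\<lambda>i. a + d - i"]) auto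
  show ?thesis
    unfolding det_inv_fact_mat prod_descending_diffs_eq_prod_fact[OF assms] denominator ..
qed

lemma invertible_mat_of_det_nonzero:
  fixes A :: "'a :: field mat"
  assumes "A \<in> carrier_mat n n" and "det A \<noteq> 0"
  shows "invertible_mat A"
proof -
  have "A \<in> Units (ring_mat TYPE('a) n undefined)"
    using assms by (rule det_non_zero_imp_unit)
  then obtain B where "B \<in> carrier_mat n n" "B * A = 1\<^sub>m n" "A * B = 1\<^sub>m n"
    unfolding Units_def ring_mat_def by auto
  with assms show ?thesis
    unfolding invertible_mat_def inverts_mat_def by auto
qed

theorem theoremA2:
  fixes k1 k2 :: nat
  assumes "0 < k1" and "k1 < k2" and "k2 \<le> 2 * k1"
  shows "det (digamma_mat k1 k2) =
           (\<Prod>i = 1..k2 - k1. fact i) / (\<Prod>i = k1..k2. fact i)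
         \<and> invertible_mat (digamma_mat k1 k2)"
proof -
  define d where "d = k2 - k1"
  have "d \<le> k1" and k2: "k2 = k1 + d"
    using assms by (auto simp: d_def)
  have digamma: "digamma_mat k1 k2 = inv_fact_mat (\<lambda>i. k1 - i) (Suc d)"
    by (simp add: digamma_mat_def inv_fact_mat_def d_def)
  have det: "det (digamma_mat k1 k2) = (\<Prod>i = 1..k2 - k1. fact i) / (\<Prod>i = k1..k2. fact i)"
    unfolding digamma det_inv_fact_mat_descending[OF \<open>d \<le> k1\<close>] by (simp add: k2)
  moreover have "det (digamma_mat k1 k2) \<noteq> 0"
    unfolding det by (simp add: prod_zero_iff)
  moreover have "digamma_mat k1 k2 \<in> carrier_mat (Suc d) (Suc d)"
    unfolding digamma by simp
  ultimately show ?thesis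
    using invertible_mat_of_det_nonzero by blast
qed

end
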